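(* Let $X$ be an $n$-valued group and let $S$ and $S'$ be finite generating sets of $X$. Let $y,y'\in X$. Denote by $B(x,r)$ and $B'(x,r)$ the balls of radius $r$ centred at $x$ with respect to $S$ and $S'$ respectively. Then there is a constant $C>0$ such that for all $r\ge 1$ $$|B(y,C^{-1}r)|\le |B'(y',r)|\le |B(y,Cr)|.$$
   Context: For a set $X$, $\operatorname{Sym}^n X=X^n/S_n$ is the set of $n$-multi-sets (unordered $n$-tuples with multiplicities) of elements of $X$. An $n$-valued multiplication on $X$ is a map $X\times X\to \operatorname{Sym}^nX$, $(x,y)\mapsto x*y=[(x*y)_1,\dots,(x*y)_n]$; it is extended to multi-sets by multiplying elementwise and collecting all results with multiplicity. An $n$-valued group is a set $X$ with such a multiplication satisfying: (associativity) the $n^2$-multi-sets $[x*(y*z)_1,\dots,x*(y*z)_n]$ and $[(x*y)_1*z,\dots,(x*y)_n*z]$ coincide for all $x,y,z$; (unit) there is $e\in X$ with $e*x=x*e=[x,\dots,x]$ for all $x$; (inverse) there is a map $\operatorname{inv}:X\to X$ with $e\in \operatorname{inv}(x)*x$ and $e\in x*\operatorname{inv}(x)$ for all $x$. For a multi-set $M$, $\operatorname{Set}(M)$ denotes the set of distinct elements of $M$. A subset $S\subseteq X$ generates $X$ if every element of $X$ lies in $\operatorname{Set}(s_1*\dots*s_m)$ for some $s_i\in S$. The ball of radius $r\ge0$ centred at $x\in X$ with respect to $S$ is $B(x,r)=\{y\in X:\exists m\in\mathbb{Z}_{\ge0},\ m\le r,\ \exists s_{i_1},\dots,s_{i_m}\in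 S,\ y\in \operatorname{Set}(x*s_{i_1}*\dots*s_{i_m})\}$ (for $m=0$ this gives $x$ itself). *)

theory Defs
  imports Complex_Main "HOL-Library.Multiset"
begin

definition mmul :: "('a \<Rightarrow> 'a \<Rightarrow> 'a multiset) \<Rightarrow> 'a multiset \<Rightarrow> 'a multiset \<Rightarrow> 'a multiset" where
  "mmul m M N = sum_mset (image_mset (\<lambda>x. sum_mset (image_mset (\<lambda>y. m x y) N)) M)"

definition nvalued_group :: "nat \<Rightarrow> ('a \<Rightarrow> 'a \<Rightarrow> 'a multiset) \<Rightarrow> bool" where
  "nvalued_group n m \<longleftrightarrow>
     (\<forall>x y. size (m x y) = n) \<and>
     (\<forall>x y z. mmul m {#x#} (m y z) = mmul m (m x y) {#z#}) \<and>
     (\<exists>e. (\<forall>x. m e x = replicate_mset n x \<and> m x e = replicate_mset n x) \<and>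
          (\<exists>inv. \<forall>x. e \<in># m (inv x) x \<and> e \<in># m x (inv x)))"

fun mprod :: "('a \<Rightarrow> 'a \<Rightarrow> 'a multiset) \<Rightarrow> 'a multiset \<Rightarrow> 'a list \<Rightarrow> 'a multiset" where
  "mprod m M [] = M"
| "mprod m M (s # ss) = mprod m (mmul m M {#s#}) ss"

definition generates :: "('a \<Rightarrow> 'a \<Rightarrow> 'a multiset) \<Rightarrow> 'a set \<Rightarrow> bool" where
  "generates m S \<longleftrightarrow>
     (\<forall>x. \<exists>s ss. set (s # ss) \<subseteq> S \<and> x \<in># mprod m {#s#} ss)"

definition ball_nv :: "('a \<Rightarrow> 'a \<Rightarrow> 'a multiset) \<Rightarrow> 'a set \<Rightarrow> 'a \<Rightarrow> real \<Rightarrow> 'a set" where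
  "ball_nv m S x r = {y. \<exists>ss. real (length ss) \<le> r \<and> set ss \<subseteq> S \<and> y \<in># mprod m {#x#} ss}"

end

theory Submission
  imports Defs
begin

text \<open>Each element z is reached by a word w over S, and associativity turns this into
  a * z \<subseteq> a * w for every a; so every word over S' can be replaced by a word over S at
  most L times longer. Unit and inverse give y' \<in> y * z for some z, which shifts the
  centre at the cost of an additive constant d. Hence B'(y', R) \<subseteq> B(y, L R + d) and
  symmetrically; for r \<ge> 1 the additive constant is absorbed into the multiplicative one,
  and balls of radius below 1 are just their centres.\<close>

lemma mmul_empty_left [simp]: "mmul m {#} N = {#}"
  by (simp add: mmul_def)

lemma mmul_empty_right [simp]: "mmul m M {#} = {#}"
  by (simp add: mmul_def)

lemma mmul_single [simp]: "mmul m {#x#} {#y#} = m x y"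
  by (simp add: mmul_def)

lemma mmul_add_left: "mmul m (M + M') N = mmul m M N + mmul m M' N"
  by (simp add: mmul_def)

lemma set_mset_mmul:
  "set_mset (mmul m M N) = (\<Union>x\<in>set_mset M. \<Union>y\<in>set_mset N. set_mset (m x y))"
  by (simp add: mmul_def)

lemma mmul_assoc:
  assumes "\<And>x y z. mmul m {#x#} (m y z) = mmul m (m x y) {#z#}"
  shows "mmul m M (mmul m N P) = mmul m (mmul m M N) P"
proof (induction M)
  case (add x M)
  have "mmul m {#x#} (mmul m N P) = mmul m (mmul m {#x#} N) P"
  proof (induction N)
    case (add y N)
    have "mmul m {#x#} (mmul m {#y#} P) = mmul m (m x y) P"
    proof (induction P)
      case (add z P)
      then show ?case
        using assms[of x y z] by (simp add: mmul_def sum_mset.distrib)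
    qed simp
    with add.IH show ?case
      by (simp add: mmul_def sum_mset.distrib)
  qed simp
  with add.IH show ?case
    by (simp add: mmul_def sum_mset.distrib)
qed simp

lemma mprod_append: "mprod m M (ss @ ts) = mprod m (mprod m M ss) ts"
  by (induction ss arbitrary: M) auto

lemma mprod_empty [simp]: "mprod m {#} ss = {#}"
  by (induction ss) auto

lemma mprod_add: "mprod m (M + M') ss = mprod m M ss + mprod m M' ss"
  by (induction ss arbitrary: M M') (auto simp: mmul_add_left)

lemma mprod_add_mset: "mprod m (add_mset x M) ss = mprod m {#x#} ss + mprod m M ss"
  by (metis add_mset_add_single mprod_add union_commute)

lemma set_mset_mprod:
  "set_mset (mprod m M ss) = (\<Union>a\<in>set_mset M. set_mset (mprod m {#a#} ss))"
proof (induction M)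
  case (add x M)
  then show ?case
    by (subst mprod_add_mset) simp
qed simp

lemma set_mset_mprod_mono:
  "set_mset M \<subseteq> set_mset M' \<Longrightarrow> set_mset (mprod m M ss) \<subseteq> set_mset (mprod m M' ss)"
  by (subst (1 2) set_mset_mprod) blast

lemma mmul_mprod:
  assumes "\<And>x y z. mmul m {#x#} (m y z) = mmul m (m x y) {#z#}"
  shows "mmul m M (mprod m N ss) = mprod m (mmul m M N) ss"
  by (induction ss arbitrary: N) (auto simp: mmul_assoc[OF assms])

lemma set_mset_mprod_subset_concat_map:
  assumes "\<And>s a. s \<in> set ws \<Longrightarrow> set_mset (m a s) \<subseteq> set_mset (mprod m {#a#} (f s))"
  shows "set_mset (mprod m M ws) \<subseteq> set_mset (mprod m M (concat (map f ws)))"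
  using assms
proof (induction ws arbitrary: M)
  case (Cons s ws)
  have "set_mset (mmul m M {#s#}) \<subseteq> set_mset (mprod m M (f s))"
    using Cons.prems[of s] by (subst set_mset_mprod) (auto simp: set_mset_mmul)
  have "set_mset (mprod m M (s # ws)) = set_mset (mprod m (mmul m M {#s#}) ws)"
    by simp
  also have "\<dots> \<subseteq> set_mset (mprod m (mmul m M {#s#}) (concat (map f ws)))"
    using Cons by simp
  also have "\<dots> \<subseteq> set_mset (mprod m (mprod m M (f s)) (concat (map f ws)))"
    by (rule set_mset_mprod_mono) fact
  also have "\<dots> = set_mset (mprod m M (concat (map f (s # ws))))"
    by (simp add: mprod_append)
  finally show ?case .
qed simp

lemma nvalued_group_assoc:
  "nvalued_group n m \<Longrightarrow> mmul m {#x#} (m y z) = mmul m (m x y) {#z#}"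
  unfolding nvalued_group_def by blast

lemma nvalued_group_pos: "nvalued_group n m \<Longrightarrow> 0 < n"
  unfolding nvalued_group_def by (metis empty_iff set_mset_empty size_eq_0_iff_empty gr0I)

lemma nvalued_group_right_divisible:
  assumes "nvalued_group n m"
  obtains z where "y' \<in># m y z"
proof -
  obtain e inv where unit: "\<And>x. m e x = replicate_mset n x"
    and inv: "e \<in># m y (inv y)"
    using assms unfolding nvalued_group_def by blast
  have "y' \<in># m e y'"
    using unit nvalued_group_pos[OF assms] by simp
  also have "set_mset (m e y') \<subseteq> set_mset (mmul m (m y (inv y)) {#y'#})"
    using inv by (auto simp: set_mset_mmul)
  also have "mmul m (m y (inv y)) {#y'#} = mmul m {#y#} (m (inv y) y')"
    using nvalued_group_assoc[OF assms] by simp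
  finally show ?thesis
    using that by (auto simp: set_mset_mmul)
qed

lemma generates_dominating_word:
  assumes "nvalued_group n m" and "generates m S"
  shows "\<exists>w. set w \<subseteq> S \<and> (\<forall>a. set_mset (m a z) \<subseteq> set_mset (mprod m {#a#} w))"
proof -
  obtain s ss where word: "set (s # ss) \<subseteq> S" and z: "z \<in># mprod m {#s#} ss"
    using assms(2) unfolding generates_def by blast
  have "mprod m {#a#} (s # ss) = mmul m {#a#} (mprod m {#s#} ss)" for a
    by (simp add: mmul_mprod[OF nvalued_group_assoc[OF assms(1)]])
  then have "set_mset (m a z) \<subseteq> set_mset (mprod m {#a#} (s # ss))" for a
    using z by (auto simp: set_mset_mmul)
  with word show ?thesis
    by blast
qed

lemma ball_nv_subset_change_generators:
  assumes "\<And>s. s \<in> S' \<Longrightarrow> set (f s) \<subseteq> S \<and> length (f s) \<le> L"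
    and "\<And>s a. s \<in> S' \<Longrightarrow> set_mset (m a s) \<subseteq> set_mset (mprod m {#a#} (f s))"
  shows "ball_nv m S' x R \<subseteq> ball_nv m S x (real L * R)"
proof
  fix x' assume "x' \<in> ball_nv m S' x R"
  then obtain ws where len: "real (length ws) \<le> R" and ws: "set ws \<subseteq> S'"
    and x': "x' \<in># mprod m {#x#} ws"
    unfolding ball_nv_def by blast
  have "length (concat (map f ws)) \<le> L * length ws"
    using ws assms(1) by (induction ws) (simp_all add: add_mono)
  then have "real (length (concat (map f ws))) \<le> real L * real (length ws)"
    by (metis of_nat_le_iff of_nat_mult)
  also have "\<dots> \<le> real L * R"
    using len by (simp add: mult_left_mono)
  finally have "real (length (concat (map f ws))) \<le> real L * R" .
  moreover have "set (concat (map f ws)) \<subseteq> S"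
    using ws assms(1) by auto
  moreover have "x' \<in># mprod m {#x#} (concat (map f ws))"
    using set_mset_mprod_subset_concat_map[of ws m f "{#x#}"] ws assms(2) x' by blast
  ultimately show "x' \<in> ball_nv m S x (real L * R)"
    unfolding ball_nv_def by blast
qed

lemma ball_nv_subset_change_centre:
  assumes "y' \<in># mprod m {#y#} u" and "set u \<subseteq> S"
  shows "ball_nv m S y' R \<subseteq> ball_nv m S y (R + real (length u))"
proof
  fix x assume "x \<in> ball_nv m S y' R"
  then obtain ws where "real (length ws) \<le> R" "set ws \<subseteq> S" "x \<in># mprod m {#y'#} ws"
    unfolding ball_nv_def by blast
  moreover have "set_mset (mprod m {#y'#} ws) \<subseteq> set_mset (mprod m {#y#} (u @ ws))"
    using set_mset_mprod_mono[of "{#y'#}" "mprod m {#y#} u" m ws] assms(1)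
    by (simp add: mprod_append)
  ultimately show "x \<in> ball_nv m S y (R + real (length u))"
    using assms(2) unfolding ball_nv_def
    by (intro CollectI exI[of _ "u @ ws"]) auto
qed

lemma ball_nv_subset_affine:
  assumes "nvalued_group n m" and "finite S'" and "generates m S"
  obtains L d :: nat where "\<And>R. ball_nv m S' y' R \<subseteq> ball_nv m S y (real L * R + real d)"
proof -
  obtain f where f: "\<And>z. set (f z) \<subseteq> S"
    and dom: "\<And>z a. set_mset (m a z) \<subseteq> set_mset (mprod m {#a#} (f z))"
    using generates_dominating_word[OF assms(1,3)] by metis
  obtain L where L: "\<And>s. s \<in> S' \<Longrightarrow> length (f s) \<le> L"
    using finite_nat_set_iff_bounded_le[of "(\<lambda>s. length (f s)) ` S'"] assms(2) by auto
  obtain z where "y' \<in># m y z"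
    using nvalued_group_right_divisible[OF assms(1)] .
  then have "y' \<in># mprod m {#y#} (f z)"
    using dom by fastforce
  then have "ball_nv m S y' R' \<subseteq> ball_nv m S y (R' + real (length (f z)))" for R'
    using f by (rule ball_nv_subset_change_centre)
  moreover have "ball_nv m S' y' R \<subseteq> ball_nv m S y' (real L * R)" for R
    using f L dom by (intro ball_nv_subset_change_generators) blast+
  ultimately show ?thesis
    using that by blast
qed

lemma finite_ball_nv: "finite S \<Longrightarrow> finite (ball_nv m S x r)"
proof -
  assume "finite S"
  then have "finite {ss. set ss \<subseteq> S \<and> length ss \<le> nat \<lfloor>r\<rfloor>}"
    by (rule finite_lists_length_le)
  moreover have "ball_nv m S x r
      \<subseteq> (\<Union>ss\<in>{ss. set ss \<subseteq> S \<and> length ss \<le> nat \<lfloor>r\<rfloor>}. set_mset (mprod m {#x#} ss))"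
    unfolding ball_nv_def by (auto simp: le_nat_floor)
  ultimately show ?thesis
    by (meson finite_UN_I finite_set_mset finite_subset)
qed

lemma ball_nv_mono: "r \<le> r' \<Longrightarrow> ball_nv m S x r \<subseteq> ball_nv m S x r'"
  unfolding ball_nv_def by (auto intro: order_trans)

lemma centre_in_ball_nv: "0 \<le> r \<Longrightarrow> x \<in> ball_nv m S x r"
  unfolding ball_nv_def by (auto intro!: exI[of _ "[]"])

lemma ball_nv_subset_singleton:
  assumes "r < 1"
  shows "ball_nv m S x r \<subseteq> {x}"
proof
  fix z assume "z \<in> ball_nv m S x r"
  then obtain ss where "real (length ss) \<le> r" and z: "z \<in># mprod m {#x#} ss"
    unfolding ball_nv_def by blast
  with assms have "real (length ss) < 1"
    by linarith
  then have "ss = []"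
    by simp
  with z show "z \<in> {x}"
    by simp
qed

lemma card_ball_nv_le_dilated:
  assumes "finite S'"
    and incl: "\<And>R. ball_nv m S x R \<subseteq> ball_nv m S' x' (real L * R + real d)"
    and "real L + real d \<le> C" and "1 \<le> r"
  shows "card (ball_nv m S x r) \<le> card (ball_nv m S' x' (C * r))"
proof -
  have "real L * r + real d \<le> (real L + real d) * r"
    using assms(4) mult_left_mono[of 1 r "real d"] by (simp add: distrib_right)
  also have "\<dots> \<le> C * r"
    using assms(3,4) by (intro mult_right_mono) auto
  finally have "ball_nv m S' x' (real L * r + real d) \<subseteq> ball_nv m S' x' (C * r)"
    by (rule ball_nv_mono)
  with incl[of r] have "ball_nv m S x r \<subseteq> ball_nv m S' x' (C * r)"
    by (rule subset_trans)
  then show ?thesis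
    by (rule card_mono[OF finite_ball_nv[OF assms(1)]])
qed

lemma card_ball_nv_contracted_le:
  assumes "finite S'"
    and "\<And>R. ball_nv m S x R \<subseteq> ball_nv m S' x' (real L * R + real d)"
    and "real L + real d \<le> C" and "0 < C" and "1 \<le> r"
  shows "card (ball_nv m S x (r / C)) \<le> card (ball_nv m S' x' r)"
proof (cases "1 \<le> r / C")
  case True
  then show ?thesis
    using card_ball_nv_le_dilated[OF assms(1-3) True] assms(4) by simp
next
  case False
  then have "ball_nv m S x (r / C) \<subseteq> {x}"
    by (intro ball_nv_subset_singleton) simp
  then have "card (ball_nv m S x (r / C)) \<le> card {x}"
    by (intro card_mono) auto
  also have "\<dots> \<le> card (ball_nv m S' x' r)"
  proof -
    have "x' \<in> ball_nv m S' x' r"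
      using assms(5) by (intro centre_in_ball_nv) simp
    then have "0 < card (ball_nv m S' x' r)"
      using finite_ball_nv[OF assms(1)] card_gt_0_iff by blast
    then show ?thesis
      by simp
  qed
  finally show ?thesis .
qed

theorem mainTheorem1:
  fixes n :: nat and m :: "'a \<Rightarrow> 'a \<Rightarrow> 'a multiset"
    and S S' :: "'a set" and y y' :: 'a
  assumes "nvalued_group n m"
    and "finite S" and "generates m S"
    and "finite S'" and "generates m S'"
  shows "\<exists>C::real. C > 0 \<and> (\<forall>r::real. r \<ge> 1 \<longrightarrow>
           card (ball_nv m S y (r / C)) \<le> card (ball_nv m S' y' r) \<and>
           card (ball_nv m S' y' r) \<le> card (ball_nv m S y (C * r)))"
proof -
  obtain L d :: nat where S'_in_S: "\<And>R. ball_nv m S' y' R \<subseteq> ball_nv m S y (real L * R + real d)"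
    using ball_nv_subset_affine[OF assms(1,4,3), of y' y] by blast
  obtain L' d' :: nat where S_in_S': "\<And>R. ball_nv m S y R \<subseteq> ball_nv m S' y' (real L' * R + real d')"
    using ball_nv_subset_affine[OF assms(1,2,5), of y y'] by blast
  define C where "C = real L + real d + real L' + real d' + 1"
  have C: "0 < C" "real L + real d \<le> C" "real L' + real d' \<le> C"
    unfolding C_def by simp_all
  have "card (ball_nv m S y (r / C)) \<le> card (ball_nv m S' y' r)"
    and "card (ball_nv m S' y' r) \<le> card (ball_nv m S y (C * r))" if "1 \<le> r" for r
    using card_ball_nv_contracted_le[OF assms(4) S_in_S' C(3,1) that]
      card_ball_nv_le_dilated[OF assms(2) S'_in_S C(2) that] .
  with C(1) show ?thesis
    by auto
qed

end
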